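(* Let $S\subseteq\{0,1,\dots,\omega\}$ be finite. (i) $A\vdash_{\mathbf{RC}_S}B$ iff $A\vdash B$ is true in all finite RC$_S$-models. (ii) $A\vdash_{\mathbf{RC\omega}_S}B$ iff $A\vdash B$ is true in all finite persistent RC$_S$-models.
   Context: Strictly positive formulas: $A::= p\mid \top\mid (A\land B)\mid \alpha A$, $\alpha\le\omega$; for a signature $S$, ${\mathcal L}_S$ is the set of such formulas using only modalities from $S$, and $L_S$ is the logic $L$ with axioms and rules restricted to ${\mathcal L}_S$. $\mathbf{RJ}$: $A\vdash A$; $A\vdash\top$; cut; $A\land B\vdash A$; $A\land B\vdash B$; from $A\vdash B$, $A\vdash C$ infer $A\vdash B\land C$; from $A\vdash B$ infer $\alpha A\vdash\alpha B$; $\alpha\alpha A\vdash\alpha A$; $\alpha\beta A\vdash\beta A$, $\beta\alpha A\vdash\beta A$ for $\alpha\ge\beta$; $\alpha A\land\beta B\vdash\alpha(A\land\beta B)$ for $\alpha>\beta$. $\mathbf{RC}=\mathbf{RJ}+\{\alpha A\vdash\beta A:\alpha>\beta\}$; $\mathbf{RC\omega}=\mathbf{RC}+\{\omega A\vdash A\}$. Kripke model for $S$: nonempty $W$, relations $(R_\alpha)_{\alpha\in S}$, valuation; $x\Vdash\alpha A$ iff $\exists y(xR_\alpha y\wedge y\Vdash A)$, with usual clauses for $\top,\land$. RC$_S$-frame: for all $\alpha,\beta\in S$, $R_\alpha R_\beta\subseteq R_{\min(\alpha,\beta)}$; for $\alpha>\beta$, $xR_\alpha y\wedge xR_\beta z\Rightarrow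 yR_\beta z$; and $R_\alpha\subseteq R_\beta$ for $\beta<\alpha$. Persistent: $x\Vdash p$ and $yR_\omega x$ imply $y\Vdash p$ (if $\omega\in S$). Finite model: $W$ finite. A sequent is true in a model if it holds at every node. *)

theory Defs
  imports Main "HOL-Library.Extended_Nat"
begin

text \<open>Modalities are indexed by ordinals \<open>\<alpha> \<le> \<omega>\<close>, represented by \<open>enat\<close>
  (natural numbers together with \<open>\<infinity>\<close> = \<omega>).\<close>

datatype 'p form =
    Var 'p
  | Top
  | Conj "'p form" "'p form"
  | Dia enat "'p form"

fun mods :: "'p form \<Rightarrow> enat set" where
  "mods (Var p) = {}"
| "mods Top = {}"
| "mods (Conj A B) = mods A \<union> mods B"
| "mods (Dia a A) = insert a (mods A)"

definition inL :: "enat set \<Rightarrow> 'p form \<Rightarrow> bool" where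
  "inL S A \<longleftrightarrow> mods A \<subseteq> S"

inductive deriv :: "bool \<Rightarrow> enat set \<Rightarrow> 'p form \<Rightarrow> 'p form \<Rightarrow> bool" for w S where
  refl: "inL S A \<Longrightarrow> deriv w S A A"
| top: "inL S A \<Longrightarrow> deriv w S A Top"
| cut: "deriv w S A B \<Longrightarrow> deriv w S B C \<Longrightarrow> deriv w S A C"
| conjE1: "inL S A \<Longrightarrow> inL S B \<Longrightarrow> deriv w S (Conj A B) A"
| conjE2: "inL S A \<Longrightarrow> inL S B \<Longrightarrow> deriv w S (Conj A B) B"
| conjI: "deriv w S A B \<Longrightarrow> deriv w S A C \<Longrightarrow> deriv w S A (Conj B C)"
| mono: "a \<in> S \<Longrightarrow> deriv w S A B \<Longrightarrow> deriv w S (Dia a A) (Dia a B)"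
| trans4: "a \<in> S \<Longrightarrow> inL S A \<Longrightarrow> deriv w S (Dia a (Dia a A)) (Dia a A)"
| mix1: "a \<in> S \<Longrightarrow> b \<in> S \<Longrightarrow> a \<ge> b \<Longrightarrow> inL S A \<Longrightarrow>
           deriv w S (Dia a (Dia b A)) (Dia b A)"
| mix2: "a \<in> S \<Longrightarrow> b \<in> S \<Longrightarrow> a \<ge> b \<Longrightarrow> inL S A \<Longrightarrow>
           deriv w S (Dia b (Dia a A)) (Dia b A)"
| J5: "a \<in> S \<Longrightarrow> b \<in> S \<Longrightarrow> a > b \<Longrightarrow> inL S A \<Longrightarrow> inL S B \<Longrightarrow>
           deriv w S (Conj (Dia a A) (Dia b B)) (Dia a (Conj A (Dia b B)))"
| RC: "a \<in> S \<Longrightarrow> b \<in> S \<Longrightarrow> a > b \<Longrightarrow> inL S A \<Longrightarrow>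
           deriv w S (Dia a A) (Dia b A)"
| omega: "w \<Longrightarrow> \<infinity> \<in> S \<Longrightarrow> inL S A \<Longrightarrow> deriv w S (Dia \<infinity> A) A"

abbreviation RC_der :: "enat set \<Rightarrow> 'p form \<Rightarrow> 'p form \<Rightarrow> bool" where
  "RC_der \<equiv> deriv False"

abbreviation RCw_der :: "enat set \<Rightarrow> 'p form \<Rightarrow> 'p form \<Rightarrow> bool" where
  "RCw_der \<equiv> deriv True"

fun sat :: "'w set \<Rightarrow> (enat \<Rightarrow> 'w \<Rightarrow> 'w \<Rightarrow> bool) \<Rightarrow> ('p \<Rightarrow> 'w set) \<Rightarrow> 'w \<Rightarrow> 'p form \<Rightarrow> bool" where
  "sat W R V x (Var p) = (x \<in> V p)"
| "sat W R V x Top = True"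
| "sat W R V x (Conj A B) = (sat W R V x A \<and> sat W R V x B)"
| "sat W R V x (Dia a A) = (\<exists>y\<in>W. R a x y \<and> sat W R V y A)"

definition RC_frame :: "enat set \<Rightarrow> 'w set \<Rightarrow> (enat \<Rightarrow> 'w \<Rightarrow> 'w \<Rightarrow> bool) \<Rightarrow> bool" where
  "RC_frame S W R \<longleftrightarrow>
     W \<noteq> {} \<and>
     (\<forall>a\<in>S. \<forall>x y. R a x y \<longrightarrow> x \<in> W \<and> y \<in> W) \<and>
     (\<forall>a\<in>S. \<forall>b\<in>S. \<forall>x\<in>W. \<forall>y\<in>W. \<forall>z\<in>W. R a x y \<and> R b y z \<longrightarrow> R (min a b) x z) \<and>
     (\<forall>a\<in>S. \<forall>b\<in>S. a > b \<longrightarrow> (\<forall>x\<in>W. \<forall>y\<in>W. \<forall>z\<in>W. R a x y \<and> R b x z \<longrightarrow> R b y z)) \<and>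
     (\<forall>a\<in>S. \<forall>b\<in>S. b < a \<longrightarrow> (\<forall>x\<in>W. \<forall>y\<in>W. R a x y \<longrightarrow> R b x y))"

definition persistent :: "enat set \<Rightarrow> 'w set \<Rightarrow> (enat \<Rightarrow> 'w \<Rightarrow> 'w \<Rightarrow> bool) \<Rightarrow> ('p \<Rightarrow> 'w set) \<Rightarrow> bool" where
  "persistent S W R V \<longleftrightarrow>
     (\<infinity> \<in> S \<longrightarrow> (\<forall>p. \<forall>x\<in>W. \<forall>y\<in>W. x \<in> V p \<and> R \<infinity> y x \<longrightarrow> y \<in> V p))"

definition true_in :: "'w set \<Rightarrow> (enat \<Rightarrow> 'w \<Rightarrow> 'w \<Rightarrow> bool) \<Rightarrow> ('p \<Rightarrow> 'w set) \<Rightarrow> 'p form \<Rightarrow> 'p form \<Rightarrow> bool" where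
  "true_in W R V A B \<longleftrightarrow> (\<forall>x\<in>W. sat W R V x A \<longrightarrow> sat W R V x B)"

text \<open>Finite models; worlds are taken from \<open>nat\<close>, which is no loss of generality since every
  finite model is isomorphic to one on a finite subset of \<open>nat\<close>.\<close>
definition valid_finite_RC :: "enat set \<Rightarrow> 'p form \<Rightarrow> 'p form \<Rightarrow> bool" where
  "valid_finite_RC S A B \<longleftrightarrow>
     (\<forall>(W::nat set) R V. finite W \<and> RC_frame S W R \<longrightarrow> true_in W R V A B)"

definition valid_finite_persistent_RC :: "enat set \<Rightarrow> 'p form \<Rightarrow> 'p form \<Rightarrow> bool" where
  "valid_finite_persistent_RC S A B \<longleftrightarrow>
     (\<forall>(W::nat set) R V. finite W \<and> RC_frame S W R \<and> persistent S W R V \<longrightarrow> true_in W R V A B)"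

end

theory Submission
  imports Defs
begin

text \<open>Soundness: the only non-routine axiom is \<open>\<omega>A \<turnstile> A\<close>, valid because persistence of the
  valuation lifts to all formulas. Completeness: a non-derivable \<open>A \<turnstile> B\<close> is refuted in a finite
  canonical model over the subformulas \<open>Cl\<close> of \<open>A\<close> and \<open>B\<close>, whose worlds are the sets of
  \<open>Cl\<close>-formulas derivable from a single formula. A diamond \<open>\<alpha>C\<close> derivable from \<open>G\<close> is witnessed
  by the world of \<open>E = C \<and> \<And>{\<beta>X \<in> Cl | G \<turnstile> \<beta>X, \<beta> < \<alpha>}\<close>; axiom J5 gives \<open>G \<turnstile> \<alpha>E\<close>, so the
  lower diamonds of \<open>G\<close> pass to the witness. Since \<open>Cl\<close> is finite in any case, finiteness of
  \<open>S\<close> is not needed.\<close>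

lemma inL_simps [simp]:
  "inL S (Var p)" "inL S Top"
  "inL S (Conj A B) \<longleftrightarrow> inL S A \<and> inL S B"
  "inL S (Dia a A) \<longleftrightarrow> a \<in> S \<and> inL S A"
  by (auto simp: inL_def)

lemma RC_frameD:
  assumes "RC_frame S W R"
  shows RC_frame_min: "\<lbrakk>a \<in> S; b \<in> S; x \<in> W; y \<in> W; z \<in> W; R a x y; R b y z\<rbrakk>
      \<Longrightarrow> R (min a b) x z"
    and RC_frame_eucl: "\<lbrakk>a \<in> S; b \<in> S; b < a; x \<in> W; y \<in> W; z \<in> W; R a x y; R b x z\<rbrakk>
      \<Longrightarrow> R b y z"
    and RC_frame_mono: "\<lbrakk>a \<in> S; b \<in> S; b < a; x \<in> W; y \<in> W; R a x y\<rbrakk> \<Longrightarrow> R b x y"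
  using assms unfolding RC_frame_def by blast+

section \<open>Soundness\<close>

lemma persistent_sat:
  assumes fr: "RC_frame S W R" and pe: "persistent S W R V" and inf: "\<infinity> \<in> S"
  shows "\<lbrakk>inL S A; x \<in> W; y \<in> W; R \<infinity> x y; sat W R V y A\<rbrakk> \<Longrightarrow> sat W R V x A"
proof (induction A arbitrary: x y)
  case (Var p)
  have "\<forall>p. \<forall>x\<in>W. \<forall>y\<in>W. x \<in> V p \<and> R \<infinity> y x \<longrightarrow> y \<in> V p"
    using pe inf unfolding persistent_def by (rule mp)
  then have "y \<in> V p \<Longrightarrow> x \<in> V p" using Var.prems(2-4) by blast
  with Var.prems(5) show ?case by simp
next
  case Top
  show ?case by simp
next
  case (Conj A1 A2)
  have A: "inL S A1" "inL S A2" and y: "sat W R V y A1" "sat W R V y A2"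
    using Conj.prems(1,5) by simp_all
  show ?case using Conj.IH(1)[OF A(1) Conj.prems(2-4) y(1)] Conj.IH(2)[OF A(2) Conj.prems(2-4) y(2)]
    by simp
next
  case (Dia b A)
  from Dia.prems(5) obtain z where z: "z \<in> W" "R b y z" "sat W R V z A" by auto
  have "b \<in> S" using Dia.prems(1) by simp
  with RC_frame_min[OF fr inf _ Dia.prems(2,3) z(1) Dia.prems(4) z(2)] have "R b x z" by simp
  with z show ?case by auto
qed

theorem deriv_sound:
  assumes "deriv w S A B"
  shows "\<lbrakk>RC_frame S W R; w \<longrightarrow> persistent S W R V; x \<in> W; sat W R V x A\<rbrakk>
    \<Longrightarrow> sat W R V x B"
  using assms
proof (induction arbitrary: x rule: deriv.induct)
  case (cut A B C)
  show ?case using cut.IH(2)[OF cut.prems(1-3) cut.IH(1)[OF cut.prems]] .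
next
  case (conjI A B C)
  show ?case using conjI.IH(1)[OF conjI.prems] conjI.IH(2)[OF conjI.prems] by simp
next
  case (mono a A B)
  from mono.prems(4) obtain y where y: "y \<in> W" "R a x y" "sat W R V y A" by auto
  have "sat W R V y B" using mono.IH[OF mono.prems(1,2) y(1,3)] .
  with y show ?case by auto
next
  case (trans4 a A)
  from trans4.prems(4) obtain y z
    where yz: "y \<in> W" "z \<in> W" "R a x y" "R a y z" "sat W R V z A" by auto
  have "R (min a a) x z"
    using RC_frame_min[OF trans4.prems(1) trans4.hyps(1) trans4.hyps(1) trans4.prems(3) yz(1-4)] .
  with yz show ?case by auto
next
  case (mix1 a b A)
  from mix1.prems(4) obtain y z
    where yz: "y \<in> W" "z \<in> W" "R a x y" "R b y z" "sat W R V z A" by auto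
  have "R (min a b) x z"
    using RC_frame_min[OF mix1.prems(1) mix1.hyps(1,2) mix1.prems(3) yz(1-4)] .
  with yz mix1.hyps(3) show ?case by (auto simp: min_absorb2)
next
  case (mix2 a b A)
  from mix2.prems(4) obtain y z
    where yz: "y \<in> W" "z \<in> W" "R b x y" "R a y z" "sat W R V z A" by auto
  have "R (min b a) x z"
    using RC_frame_min[OF mix2.prems(1) mix2.hyps(2,1) mix2.prems(3) yz(1-4)] .
  with yz mix2.hyps(3) show ?case by (auto simp: min_absorb1)
next
  case (J5 a b A B)
  from J5.prems(4) obtain y z
    where yz: "y \<in> W" "z \<in> W" "R a x y" "R b x z" "sat W R V y A" "sat W R V z B" by auto
  have "R b y z" using RC_frame_eucl[OF J5.prems(1) J5.hyps(1-3) J5.prems(3) yz(1-4)] .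
  with yz show ?case by auto
next
  case (RC a b A)
  from RC.prems(4) obtain y where y: "y \<in> W" "R a x y" "sat W R V y A" by auto
  have "R b x y" using RC_frame_mono[OF RC.prems(1) RC.hyps(1-3) RC.prems(3) y(1,2)] .
  with y show ?case by auto
next
  case (omega A)
  from omega.prems(4) obtain y where y: "y \<in> W" "R \<infinity> x y" "sat W R V y A" by auto
  have "persistent S W R V" using omega.hyps(1) omega.prems(2) by simp
  from persistent_sat[OF omega.prems(1) this omega.hyps(2,3) omega.prems(3) y] show ?case .
qed simp_all

primrec conj_list :: "'p form list \<Rightarrow> 'p form \<Rightarrow> 'p form" where
  "conj_list [] X = X"
| "conj_list (F # L) X = Conj (conj_list L X) F"

lemma inL_conj_list: "\<lbrakk>inL S X; \<forall>F\<in>set L. inL S F\<rbrakk> \<Longrightarrow> inL S (conj_list L X)"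
  by (induction L) auto

lemma deriv_conj_list_base: "\<lbrakk>inL S X; \<forall>F\<in>set L. inL S F\<rbrakk> \<Longrightarrow> deriv w S (conj_list L X) X"
proof (induction L)
  case Nil
  then show ?case by (simp add: deriv.refl)
next
  case (Cons F L)
  have "inL S (conj_list L X)" "inL S F" using inL_conj_list[OF Cons.prems(1)] Cons.prems(2) by auto
  from deriv.conjE1[OF this] have "deriv w S (Conj (conj_list L X) F) (conj_list L X)" .
  with Cons show ?case using deriv.cut by fastforce
qed

lemma deriv_conj_list_member:
  "\<lbrakk>inL S X; \<forall>F\<in>set L. inL S F; F \<in> set L\<rbrakk> \<Longrightarrow> deriv w S (conj_list L X) F"
proof (induction L)
  case Nil
  then show ?case by simp
next
  case (Cons G L)
  have i: "inL S (conj_list L X)" "inL S G" using inL_conj_list[OF Cons.prems(1)] Cons.prems(2) by auto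
  show ?case
  proof (cases "F = G")
    case True
    then show ?thesis using deriv.conjE2[OF i] by simp
  next
    case False
    then have "deriv w S (conj_list L X) F" using Cons by simp
    moreover have "deriv w S (Conj (conj_list L X) G) (conj_list L X)" using deriv.conjE1[OF i] .
    ultimately show ?thesis using deriv.cut by fastforce
  qed
qed

text \<open>Iterating axiom J5 moves lower diamonds inside \<open>\<alpha>\<close>.\<close>

lemma deriv_Dia_conj_list:
  assumes "deriv w S G (Dia a X)" "a \<in> S" "inL S X"
    and "\<forall>F\<in>set L. \<exists>c D. F = Dia c D \<and> c < a \<and> c \<in> S \<and> inL S D \<and> deriv w S G F"
  shows "deriv w S G (Dia a (conj_list L X))"
  using assms(4)
proof (induction L)
  case Nil
  then show ?case using assms(1) by simp
next
  case (Cons F L)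
  obtain c D where F: "F = Dia c D" "c < a" "c \<in> S" "inL S D" "deriv w S G F"
    using Cons.prems by auto
  have IH: "deriv w S G (Dia a (conj_list L X))" using Cons by simp
  have L: "inL S (conj_list L X)"
    using inL_conj_list[OF assms(3), of L] Cons.prems by fastforce
  have "deriv w S G (Conj (Dia a (conj_list L X)) (Dia c D))" using deriv.conjI[OF IH] F by simp
  moreover have "deriv w S (Conj (Dia a (conj_list L X)) (Dia c D))
      (Dia a (Conj (conj_list L X) (Dia c D)))"
    using deriv.J5[OF assms(2) F(3) F(2) L F(4)] .
  ultimately show ?case using deriv.cut F(1) by fastforce
qed

definition relabel_rel ::
  "('w \<Rightarrow> 'v) \<Rightarrow> 'w set \<Rightarrow> (enat \<Rightarrow> 'w \<Rightarrow> 'w \<Rightarrow> bool) \<Rightarrow> enat \<Rightarrow> 'v \<Rightarrow> 'v \<Rightarrow> bool" where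
  "relabel_rel h W R a m k \<longleftrightarrow> (\<exists>x\<in>W. \<exists>y\<in>W. m = h x \<and> k = h y \<and> R a x y)"

definition relabel_val :: "('w \<Rightarrow> 'v) \<Rightarrow> 'w set \<Rightarrow> ('p \<Rightarrow> 'w set) \<Rightarrow> 'p \<Rightarrow> 'v set" where
  "relabel_val h W V p = h ` (W \<inter> V p)"

lemma relabel_rel_image:
  "\<lbrakk>inj_on h W; x \<in> W; y \<in> W\<rbrakk> \<Longrightarrow> relabel_rel h W R a (h x) (h y) \<longleftrightarrow> R a x y"
  unfolding relabel_rel_def by (auto dest: inj_onD)

lemma relabel_val_image: "\<lbrakk>inj_on h W; x \<in> W\<rbrakk> \<Longrightarrow> h x \<in> relabel_val h W V p \<longleftrightarrow> x \<in> V p"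
  unfolding relabel_val_def by (auto dest: inj_onD)

lemma sat_relabel:
  assumes "inj_on h W"
  shows "x \<in> W \<Longrightarrow> sat (h ` W) (relabel_rel h W R) (relabel_val h W V) (h x) C \<longleftrightarrow> sat W R V x C"
proof (induction C arbitrary: x)
  case (Var p)
  then show ?case using relabel_val_image[OF assms] by simp
next
  case (Dia a C)
  then show ?case using relabel_rel_image[OF assms] by auto
qed simp_all

lemma RC_frame_relabel:
  assumes h: "inj_on h W" and fr: "RC_frame S W R"
  shows "RC_frame S (h ` W) (relabel_rel h W R)"
  unfolding RC_frame_def
proof (intro HOL.conjI)
  show "h ` W \<noteq> {}" using fr unfolding RC_frame_def by blast
  show "\<forall>a\<in>S. \<forall>m k. relabel_rel h W R a m k \<longrightarrow> m \<in> h ` W \<and> k \<in> h ` W"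
    unfolding relabel_rel_def by blast
  show "\<forall>a\<in>S. \<forall>b\<in>S. \<forall>x\<in>h ` W. \<forall>y\<in>h ` W. \<forall>z\<in>h ` W.
      relabel_rel h W R a x y \<and> relabel_rel h W R b y z \<longrightarrow> relabel_rel h W R (min a b) x z"
    by (simp add: relabel_rel_image[OF h]) (blast intro: RC_frame_min[OF fr])
  show "\<forall>a\<in>S. \<forall>b\<in>S. b < a \<longrightarrow> (\<forall>x\<in>h ` W. \<forall>y\<in>h ` W. \<forall>z\<in>h ` W.
      relabel_rel h W R a x y \<and> relabel_rel h W R b x z \<longrightarrow> relabel_rel h W R b y z)"
    by (simp add: relabel_rel_image[OF h]) (blast intro: RC_frame_eucl[OF fr])
  show "\<forall>a\<in>S. \<forall>b\<in>S. b < a \<longrightarrow> (\<forall>x\<in>h ` W. \<forall>y\<in>h ` W.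
      relabel_rel h W R a x y \<longrightarrow> relabel_rel h W R b x y)"
    by (simp add: relabel_rel_image[OF h]) (blast intro: RC_frame_mono[OF fr])
qed

lemma persistent_relabel:
  assumes h: "inj_on h W" and pe: "persistent S W R V"
  shows "persistent S (h ` W) (relabel_rel h W R) (relabel_val h W V)"
  unfolding persistent_def
  by (simp add: relabel_rel_image[OF h] relabel_val_image[OF h])
    (use pe in \<open>unfold persistent_def, blast\<close>)

lemma nat_countermodel:
  fixes W :: "'w set"
  assumes "finite W" "RC_frame S W R" "w \<longrightarrow> persistent S W R V"
    and "x \<in> W" "sat W R V x A" "\<not> sat W R V x B"
  shows "\<exists>(W'::nat set) R' V'. finite W' \<and> RC_frame S W' R' \<and> (w \<longrightarrow> persistent S W' R' V')
     \<and> \<not> true_in W' R' V' A B"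
proof -
  obtain h :: "'w \<Rightarrow> nat" where h: "inj_on h W"
    using finite_imp_inj_to_nat_seg[OF assms(1)] by blast
  have "\<not> true_in (h ` W) (relabel_rel h W R) (relabel_val h W V) A B"
    unfolding true_in_def using sat_relabel[OF h] assms(4-6) by blast
  with assms(1-3) show ?thesis
    using RC_frame_relabel[OF h] persistent_relabel[OF h] by blast
qed

section \<open>The canonical model\<close>

locale canonical_model =
  fixes w :: bool and S :: "enat set" and Cl :: "'p form set"
  assumes finite_Cl: "finite Cl" and Cl_inL: "\<And>F. F \<in> Cl \<Longrightarrow> inL S F"
    and Cl_Conj: "\<And>X Y. Conj X Y \<in> Cl \<Longrightarrow> X \<in> Cl \<and> Y \<in> Cl"
    and Cl_Dia: "\<And>a X. Dia a X \<in> Cl \<Longrightarrow> X \<in> Cl"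
begin

definition theory_of :: "'p form \<Rightarrow> 'p form set" where
  "theory_of E = {F \<in> Cl. deriv w S E F}"

definition can_W :: "'p form set set" where
  "can_W = {theory_of E | E. inL S E}"

text \<open>The first diamond clause gives one half of the truth lemma; together the two clauses make
  the RC frame conditions hold by construction, and the last clause makes the model persistent
  in the \<open>RC\<omega>\<close> case.\<close>

definition can_R :: "enat \<Rightarrow> 'p form set \<Rightarrow> 'p form set \<Rightarrow> bool" where
  "can_R a G D \<longleftrightarrow> G \<in> can_W \<and> D \<in> can_W
     \<and> (\<forall>c X. Dia c X \<in> Cl \<and> c \<le> a \<and> (X \<in> D \<or> Dia c X \<in> D) \<longrightarrow> Dia c X \<in> G)
     \<and> (\<forall>c X. Dia c X \<in> Cl \<and> c < a \<and> Dia c X \<in> G \<longrightarrow> Dia c X \<in> D)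
     \<and> (w \<and> a = \<infinity> \<longrightarrow> D \<subseteq> G)"

definition can_V :: "'p \<Rightarrow> 'p form set set" where
  "can_V p = {G \<in> can_W. Var p \<in> G}"

lemma mem_theory_of: "F \<in> theory_of E \<longleftrightarrow> F \<in> Cl \<and> deriv w S E F"
  by (simp add: theory_of_def)

lemma finite_can_W: "finite can_W"
proof -
  have "can_W \<subseteq> Pow Cl" unfolding can_W_def theory_of_def by auto
  with finite_Cl show ?thesis by (meson finite_Pow_iff finite_subset)
qed

lemma theory_of_in_can_W: "inL S E \<Longrightarrow> theory_of E \<in> can_W"
  unfolding can_W_def by blast

lemma can_R_min:
  assumes r1: "can_R a G D" and r2: "can_R b D T"
  shows "can_R (min a b) G T"
  unfolding can_R_def
proof (intro HOL.conjI allI impI)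
  show "G \<in> can_W" "T \<in> can_W" using r1 r2 unfolding can_R_def by simp_all
next
  fix c X assume h: "Dia c X \<in> Cl \<and> c \<le> min a b \<and> (X \<in> T \<or> Dia c X \<in> T)"
  then have "Dia c X \<in> D" using r2 unfolding can_R_def by simp
  then show "Dia c X \<in> G" using r1 h unfolding can_R_def by simp
next
  fix c X assume h: "Dia c X \<in> Cl \<and> c < min a b \<and> Dia c X \<in> G"
  then have "Dia c X \<in> D" using r1 unfolding can_R_def by simp
  then show "Dia c X \<in> T" using r2 h unfolding can_R_def by simp
next
  assume h: "w \<and> min a b = \<infinity>"
  then have "a = \<infinity>" "b = \<infinity>" by (auto simp: min_def split: if_splits)
  then show "T \<subseteq> G" using r1 r2 h unfolding can_R_def by blast
qed

lemma can_R_eucl: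
  assumes ba: "b < a" and r1: "can_R a G D" and r2: "can_R b G T"
  shows "can_R b D T"
  unfolding can_R_def
proof (intro HOL.conjI allI impI)
  show "D \<in> can_W" "T \<in> can_W" using r1 r2 unfolding can_R_def by simp_all
next
  fix c X assume h: "Dia c X \<in> Cl \<and> c \<le> b \<and> (X \<in> T \<or> Dia c X \<in> T)"
  then have "Dia c X \<in> G" using r2 unfolding can_R_def by simp
  moreover have "c < a" using h ba by (meson le_less_trans)
  ultimately show "Dia c X \<in> D" using r1 h unfolding can_R_def by simp
next
  fix c X assume h: "Dia c X \<in> Cl \<and> c < b \<and> Dia c X \<in> D"
  moreover have "c \<le> a" using h ba by (meson less_imp_le less_trans)
  ultimately have "Dia c X \<in> G" using r1 unfolding can_R_def by simp
  then show "Dia c X \<in> T" using r2 h unfolding can_R_def by simp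
next
  assume "w \<and> b = \<infinity>"
  with ba show "T \<subseteq> D" by simp
qed

lemma can_R_mono:
  assumes ba: "b < a" and r: "can_R a G D"
  shows "can_R b G D"
  unfolding can_R_def
proof (intro HOL.conjI allI impI)
  show "G \<in> can_W" "D \<in> can_W" using r unfolding can_R_def by simp_all
next
  fix c X assume h: "Dia c X \<in> Cl \<and> c \<le> b \<and> (X \<in> D \<or> Dia c X \<in> D)"
  moreover have "c \<le> a" using h ba by (meson le_less_trans less_imp_le)
  ultimately show "Dia c X \<in> G" using r unfolding can_R_def by simp
next
  fix c X assume h: "Dia c X \<in> Cl \<and> c < b \<and> Dia c X \<in> G"
  moreover have "c < a" using h ba by (meson less_trans)
  ultimately show "Dia c X \<in> D" using r unfolding can_R_def by simp
next
  assume "w \<and> b = \<infinity>"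
  with ba show "D \<subseteq> G" by simp
qed

lemma RC_frame_can: "RC_frame S can_W can_R"
  unfolding RC_frame_def
proof (intro HOL.conjI)
  show "can_W \<noteq> {}" using theory_of_in_can_W[of Top] by auto
  show "\<forall>a\<in>S. \<forall>G D. can_R a G D \<longrightarrow> G \<in> can_W \<and> D \<in> can_W" unfolding can_R_def by simp
qed (use can_R_min can_R_eucl can_R_mono in blast)+

lemma persistent_can: "w \<Longrightarrow> persistent S can_W can_R can_V"
  unfolding persistent_def can_R_def can_V_def by blast

lemma can_R_theory_of:
  assumes G: "inL S G" and E: "inL S E" and aS: "a \<in> S" and GE: "deriv w S G (Dia a E)"
    and lower: "\<And>c X. \<lbrakk>Dia c X \<in> theory_of G; c < a\<rbrakk> \<Longrightarrow> deriv w S E (Dia c X)"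
  shows "can_R a (theory_of G) (theory_of E)"
  unfolding can_R_def
proof (intro HOL.conjI allI impI)
  show "theory_of G \<in> can_W" "theory_of E \<in> can_W" using theory_of_in_can_W G E by auto
next
  have GEX: "deriv w S E X \<Longrightarrow> deriv w S G (Dia a X)" for X
    using deriv.cut[OF GE deriv.mono[OF aS]] by blast
  fix c X assume h: "Dia c X \<in> Cl \<and> c \<le> a \<and> (X \<in> theory_of E \<or> Dia c X \<in> theory_of E)"
  have cS: "c \<in> S" and X: "inL S X" using Cl_inL[of "Dia c X"] h by auto
  have "deriv w S G (Dia c X)"
  proof (cases "X \<in> theory_of E")
    case True
    then have GaX: "deriv w S G (Dia a X)" using GEX mem_theory_of by blast
    show ?thesis
    proof (cases "c = a")
      case True
      with GaX show ?thesis by simp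
    next
      case False
      with h have "c < a" by (blast intro: le_neq_trans)
      with GaX show ?thesis using deriv.cut[OF _ deriv.RC[OF aS cS _ X]] by blast
    qed
  next
    case False
    with h have "deriv w S E (Dia c X)" using mem_theory_of by blast
    then have "deriv w S G (Dia a (Dia c X))" using GEX by blast
    then show ?thesis using deriv.cut[OF _ deriv.mix1[OF aS cS _ X]] h by blast
  qed
  then show "Dia c X \<in> theory_of G" using h mem_theory_of by blast
next
  fix c X assume "Dia c X \<in> Cl \<and> c < a \<and> Dia c X \<in> theory_of G"
  then show "Dia c X \<in> theory_of E" using lower mem_theory_of by blast
next
  assume h: "w \<and> a = \<infinity>"
  have "deriv w S (Dia \<infinity> E) E" using deriv.omega[of w S E] h aS E by simp
  with GE h have "deriv w S G E" using deriv.cut by blast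
  then show "theory_of E \<subseteq> theory_of G" using deriv.cut mem_theory_of by blast
qed

lemma Dia_witness:
  assumes G: "inL S G" and aC: "Dia a C \<in> theory_of G"
  shows "\<exists>D\<in>can_W. can_R a (theory_of G) D \<and> C \<in> D"
proof -
  have aC_Cl: "Dia a C \<in> Cl" and GaC: "deriv w S G (Dia a C)" using aC mem_theory_of by auto
  have aS: "a \<in> S" and C: "inL S C" using Cl_inL[OF aC_Cl] by auto
  define P where "P = {F \<in> theory_of G. \<exists>c X. F = Dia c X \<and> c < a}"
  have "P \<subseteq> Cl" unfolding P_def theory_of_def by auto
  with finite_Cl obtain L where L: "set L = P" using finite_list finite_subset by metis
  have L_inL: "\<forall>F\<in>set L. inL S F" using L \<open>P \<subseteq> Cl\<close> Cl_inL by blast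
  have L_Dia: "\<forall>F\<in>set L. \<exists>c X. F = Dia c X \<and> c < a \<and> c \<in> S \<and> inL S X \<and> deriv w S G F"
    using L L_inL unfolding P_def mem_theory_of by fastforce
  define E where "E = conj_list L C"
  have E: "inL S E" unfolding E_def using inL_conj_list[OF C L_inL] .
  have "can_R a (theory_of G) (theory_of E)"
  proof (rule can_R_theory_of[OF G E aS])
    show "deriv w S G (Dia a E)" unfolding E_def using deriv_Dia_conj_list[OF GaC aS C L_Dia] .
    fix c X assume "Dia c X \<in> theory_of G" "c < a"
    then have "Dia c X \<in> set L" using L unfolding P_def by blast
    then show "deriv w S E (Dia c X)" unfolding E_def by (rule deriv_conj_list_member[OF C L_inL])
  qed
  moreover have "C \<in> theory_of E"
    using Cl_Dia[OF aC_Cl] deriv_conj_list_base[OF C L_inL] mem_theory_of E_def by blast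
  ultimately show ?thesis using theory_of_in_can_W[OF E] by blast
qed

lemma sat_can_iff: "\<lbrakk>C \<in> Cl; G \<in> can_W\<rbrakk> \<Longrightarrow> sat can_W can_R can_V G C \<longleftrightarrow> C \<in> G"
proof (induction C arbitrary: G)
  case (Var p)
  then show ?case by (simp add: can_V_def)
next
  case Top
  then obtain E where "G = theory_of E" "inL S E" unfolding can_W_def by blast
  with Top.prems show ?case using deriv.top mem_theory_of by simp
next
  case (Conj X Y)
  obtain E where E: "G = theory_of E" "inL S E" using Conj.prems unfolding can_W_def by blast
  have XY: "X \<in> Cl" "Y \<in> Cl" using Cl_Conj[OF Conj.prems(1)] by auto
  then have "inL S X" "inL S Y" using Cl_inL by auto
  then have "Conj X Y \<in> G \<longleftrightarrow> X \<in> G \<and> Y \<in> G"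
    using E XY Conj.prems(1) mem_theory_of deriv.conjI deriv.cut deriv.conjE1 deriv.conjE2
    by metis
  then show ?case using Conj.IH[OF _ Conj.prems(2)] XY by simp
next
  case (Dia a C)
  have C: "C \<in> Cl" using Cl_Dia[OF Dia.prems(1)] .
  show ?case
  proof
    assume "sat can_W can_R can_V G (Dia a C)"
    then obtain D where D: "D \<in> can_W" "can_R a G D" "sat can_W can_R can_V D C" by auto
    have "C \<in> D" using Dia.IH[OF C D(1)] D(3) by simp
    with D(2) Dia.prems(1) show "Dia a C \<in> G" unfolding can_R_def by blast
  next
    assume "Dia a C \<in> G"
    moreover obtain E where "G = theory_of E" "inL S E" using Dia.prems unfolding can_W_def by blast
    ultimately obtain D where D: "D \<in> can_W" "can_R a G D" "C \<in> D" using Dia_witness by blast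
    then have "sat can_W can_R can_V D C" using Dia.IH[OF C D(1)] by simp
    with D show "sat can_W can_R can_V G (Dia a C)" by auto
  qed
qed

end

section \<open>Completeness\<close>

fun subforms :: "'p form \<Rightarrow> 'p form set" where
  "subforms (Var p) = {Var p}"
| "subforms Top = {Top}"
| "subforms (Conj X Y) = insert (Conj X Y) (subforms X \<union> subforms Y)"
| "subforms (Dia a X) = insert (Dia a X) (subforms X)"

lemma finite_subforms: "finite (subforms A)"
  by (induction A) auto

lemma subforms_refl: "A \<in> subforms A"
  by (cases A) auto

lemma subforms_inL: "\<lbrakk>inL S A; F \<in> subforms A\<rbrakk> \<Longrightarrow> inL S F"
  by (induction A) auto

lemma subforms_Conj: "Conj X Y \<in> subforms A \<Longrightarrow> X \<in> subforms A \<and> Y \<in> subforms A"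
  by (induction A) (auto simp: subforms_refl)

lemma subforms_Dia: "Dia a X \<in> subforms A \<Longrightarrow> X \<in> subforms A"
  by (induction A) (auto simp: subforms_refl)

lemma canonical_model_subforms:
  "\<lbrakk>inL S A; inL S B\<rbrakk> \<Longrightarrow> canonical_model S (subforms A \<union> subforms B)"
  by unfold_locales (auto simp: finite_subforms dest: subforms_inL subforms_Conj subforms_Dia)

theorem deriv_complete:
  assumes A: "inL S A" and B: "inL S B" and not_deriv: "\<not> deriv w S A B"
  shows "\<exists>(W::nat set) R V. finite W \<and> RC_frame S W R \<and> (w \<longrightarrow> persistent S W R V)
    \<and> \<not> true_in W R V A B"
proof -
  interpret canonical_model w S "subforms A \<union> subforms B"
    using canonical_model_subforms[OF A B] .
  have Cl: "A \<in> subforms A \<union> subforms B" "B \<in> subforms A \<union> subforms B"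
    using subforms_refl by auto
  have world: "theory_of A \<in> can_W" using theory_of_in_can_W[OF A] .
  have "A \<in> theory_of A" using Cl deriv.refl[OF A] mem_theory_of by blast
  then have "sat can_W can_R can_V (theory_of A) A" using sat_can_iff[OF Cl(1) world] by simp
  moreover have "B \<notin> theory_of A" using not_deriv mem_theory_of by blast
  then have "\<not> sat can_W can_R can_V (theory_of A) B" using sat_can_iff[OF Cl(2) world] by simp
  ultimately show ?thesis
    using nat_countermodel[OF finite_can_W RC_frame_can _ world] persistent_can by blast
qed

lemma deriv_iff_finite_models:
  assumes "inL S A" "inL S B"
  shows "deriv w S A B \<longleftrightarrow> (\<forall>(W::nat set) R V.
    finite W \<and> RC_frame S W R \<and> (w \<longrightarrow> persistent S W R V) \<longrightarrow> true_in W R V A B)"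
    (is "_ \<longleftrightarrow> (\<forall>W R V. ?model W R V \<longrightarrow> _)")
proof
  assume d: "deriv w S A B"
  show "\<forall>W R V. ?model W R V \<longrightarrow> true_in W R V A B"
  proof (intro allI impI)
    fix W :: "nat set" and R V
    assume "?model W R V"
    then have "RC_frame S W R" "w \<longrightarrow> persistent S W R V" by simp_all
    from deriv_sound[OF d this] show "true_in W R V A B" unfolding true_in_def by blast
  qed
next
  assume valid: "\<forall>W R V. ?model W R V \<longrightarrow> true_in W R V A B"
  show "deriv w S A B"
  proof (rule ccontr)
    assume "\<not> deriv w S A B"
    from deriv_complete[OF assms this] obtain W :: "nat set" and R V
      where "?model W R V" "\<not> true_in W R V A B" by blast
    with valid show False by blast
  qed
qed

theorem corollary4p3:
  fixes S :: "enat set" and A B :: "'p form"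
  assumes "finite S" and "inL S A" and "inL S B"
  shows "(RC_der S A B \<longleftrightarrow> valid_finite_RC S A B)
       \<and> (RCw_der S A B \<longleftrightarrow> valid_finite_persistent_RC S A B)"
  using deriv_iff_finite_models[OF assms(2,3), of False] deriv_iff_finite_models[OF assms(2,3), of True]
  unfolding valid_finite_RC_def valid_finite_persistent_RC_def by simp

end
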